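(* Consider the linear system $$\frac{d\boldsymbol{x}(t)}{dt} = \mathbf{A}\boldsymbol{x}(t) + \mathbf{B}_p\boldsymbol{p}(t) + \mathbf{B}_d\boldsymbol{d}(t),\qquad t\in\mathcal{T}=[0,t_f],$$ with $\boldsymbol{x}\in\mathbb{R}^{N_x}$, $\boldsymbol{p}\in\mathbb{R}^{N_p}_{+}$, where $\mathbf{A}$ has non-positive diagonal and non-negative off-diagonal entries and $\mathbf{B}_p\ge 0$ entrywise, with a given disturbance $\boldsymbol{d}$ and initial state $\boldsymbol{x}_0$. Fix bounds $\boldsymbol{0}\le\boldsymbol{p}_{\min}\le\boldsymbol{p}_{\max}$ and $\boldsymbol{x}_{\min}\le\boldsymbol{x}_{\max}$ (componentwise). For $t\in\mathcal{T}$ define matrices $\boldsymbol{\alpha}(t),\boldsymbol{\beta}(t)\in\mathbb{R}^{N_x\times N_p}$ by $$\alpha_{i,j}(t)=\max_{0\le\tau\le t}\big(e^{\mathbf{A}(t-\tau)}\mathbf{B}_p\big)_{i,j},\qquad \beta_{i,j}(t)=\min_{0\le\tau\le t}\big(e^{\mathbf{A}(t-\tau)}\mathbf{B}_p\big)_{i,j}.$$ Let $\boldsymbol{p}_+$ and $\boldsymbol{p}_-$ be feasible power trajectories (satisfying $\boldsymbol{p}_{\min}\le\boldsymbol{p}_\pm(t)\le\boldsymbol{p}_{\max}$ and, with the same $\boldsymbol{x}_0$ and $\boldsymbol{d}$, states satisfying $\boldsymbol{x}_{\min}\le\boldsymbol{x}_\pm(t)\le\boldsymbol{x}_{\max}$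 for all $t$), and set $$\boldsymbol{b}_{\pm}(t)=\int_0^t e^{\mathbf{A}(t-\tau)}\mathbf{B}_p\,\boldsymbol{p}_\pm(\tau)\,d\tau.$$ Let $\boldsymbol{p}_a$ satisfy $\boldsymbol{p}_{\min}\le\boldsymbol{p}_a(t)\le\boldsymbol{p}_{\max}$ for all $t$ and, for all $t\in\mathcal{T}$, $$\boldsymbol{\alpha}(t)\int_0^t\boldsymbol{p}_a(\tau)\,d\tau\le\boldsymbol{b}_+(t),\qquad \boldsymbol{\beta}(t)\int_0^t\boldsymbol{p}_a(\tau)\,d\tau\ge\boldsymbol{b}_-(t)$$ (componentwise). Then the state $\boldsymbol{x}_a$ produced by $\boldsymbol{p}_a$ (same $\boldsymbol{x}_0$, $\boldsymbol{d}$) satisfies $\boldsymbol{x}_{\min}\le\boldsymbol{x}_a(t)\le\boldsymbol{x}_{\max}$ for all $t\in\mathcal{T}$.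
   Context: Integrals of vectors are componentwise; vector inequalities are componentwise. States are given by $\boldsymbol{x}(t)=e^{\mathbf{A}t}\boldsymbol{x}_0+\int_0^t e^{\mathbf{A}(t-\tau)}(\mathbf{B}_d\boldsymbol{d}(\tau)+\mathbf{B}_p\boldsymbol{p}(\tau))\,d\tau$. A matrix with non-negative off-diagonal entries is called Metzler. *)

theory Defs
  imports "HOL-Analysis.Analysis"
begin

primrec mat_pow :: "real^'n^'n \<Rightarrow> nat \<Rightarrow> real^'n^'n" where
  "mat_pow A 0 = mat 1"
| "mat_pow A (Suc k) = A ** mat_pow A k"

definition mat_exp :: "real^'n^'n \<Rightarrow> real^'n^'n" where
  "mat_exp A = (\<Sum>k. (1 / fact k) *\<^sub>R mat_pow A k)"

definition metzler_nonpos_diag :: "real^'n^'n \<Rightarrow> bool" where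
  "metzler_nonpos_diag A \<longleftrightarrow> (\<forall>i. A $ i $ i \<le> 0) \<and> (\<forall>i j. i \<noteq> j \<longrightarrow> A $ i $ j \<ge> 0)"

definition state ::
  "real^'n^'n \<Rightarrow> real^'d^'n \<Rightarrow> real^'p^'n \<Rightarrow> real^'n \<Rightarrow> (real \<Rightarrow> real^'d) \<Rightarrow> (real \<Rightarrow> real^'p) \<Rightarrow> real \<Rightarrow> real^'n"
  where
  "state A Bd Bp x0 d p t =
     mat_exp (t *\<^sub>R A) *v x0
     + integral {0..t} (\<lambda>\<tau>. mat_exp ((t - \<tau>) *\<^sub>R A) *v (Bd *v d \<tau> + Bp *v p \<tau>))"

definition alpha_mat :: "real^'n^'n \<Rightarrow> real^'p^'n \<Rightarrow> real \<Rightarrow> real^'p^'n" where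
  "alpha_mat A Bp t = (\<chi> i j. Sup ((\<lambda>\<tau>. (mat_exp ((t - \<tau>) *\<^sub>R A) ** Bp) $ i $ j) ` {0..t}))"

definition beta_mat :: "real^'n^'n \<Rightarrow> real^'p^'n \<Rightarrow> real \<Rightarrow> real^'p^'n" where
  "beta_mat A Bp t = (\<chi> i j. Inf ((\<lambda>\<tau>. (mat_exp ((t - \<tau>) *\<^sub>R A) ** Bp) $ i $ j) ` {0..t}))"

definition bp_int :: "real^'n^'n \<Rightarrow> real^'p^'n \<Rightarrow> (real \<Rightarrow> real^'p) \<Rightarrow> real \<Rightarrow> real^'n" where
  "bp_int A Bp p t = integral {0..t} (\<lambda>\<tau>. mat_exp ((t - \<tau>) *\<^sub>R A) ** Bp *v p \<tau>)"

end

theory Submission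
  imports Defs
begin

text \<open>The power trajectory enters the state only through the forced response
  bp_int, whose i-th component is the sum over j of the integrals over [0, t] of
  (e^{A(t-tau)} Bp)_{ij} p_j(tau). For p \<ge> 0 each of these integrals lies between
  beta_{ij}(t) and alpha_{ij}(t) times the integral of p_j, so the hypotheses on pa give
  bp_int pminus \<le> bp_int pa \<le> bp_int pplus, and the state of pa is squeezed between
  the states of pminus and pplus.\<close>

lemma mat_pow_scaleR: "mat_pow (c *\<^sub>R A) n = c ^ n *\<^sub>R mat_pow A n"
  by (induction n) (simp_all add: matrix_scalar_ac flip: scalar_matrix_assoc)

lemma abs_mat_pow_component_le:
  "\<bar>mat_pow (A::real^'n^'n) n $ i $ k\<bar> \<le> (\<Sum>i\<in>UNIV. \<Sum>j\<in>UNIV. \<bar>A $ i $ j\<bar>) ^ n"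
proof (induction n arbitrary: i k)
  case 0
  then show ?case by (simp add: mat_def)
next
  case (Suc n)
  let ?a = "\<Sum>i\<in>UNIV. \<Sum>j\<in>UNIV. \<bar>A $ i $ j\<bar>"
  have "\<bar>mat_pow A (Suc n) $ i $ k\<bar> = \<bar>\<Sum>j\<in>UNIV. A $ i $ j * mat_pow A n $ j $ k\<bar>"
    by (simp add: matrix_matrix_mult_def)
  also have "\<dots> \<le> (\<Sum>j\<in>UNIV. \<bar>A $ i $ j\<bar>) * ?a ^ n"
    unfolding sum_distrib_right
    by (rule order_trans[OF sum_abs])
      (auto intro!: sum_mono mult_left_mono Suc sum_nonneg zero_le_power simp: abs_mult)
  also have "\<dots> \<le> ?a * ?a ^ n"
    by (intro mult_right_mono member_le_sum[where f = "\<lambda>i. \<Sum>j\<in>UNIV. \<bar>A $ i $ j\<bar>"])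
      (auto intro!: sum_nonneg zero_le_power)
  finally show ?case by simp
qed

lemma summable_mat_pow_component_series:
  "summable (\<lambda>n. mat_pow (A::real^'n^'n) n $ i $ k / fact n * s ^ n)"
proof (rule summable_comparison_test[OF _ summable_exp])
  let ?a = "\<Sum>i\<in>UNIV. \<Sum>j\<in>UNIV. \<bar>A $ i $ j\<bar>"
  show "\<exists>N. \<forall>n\<ge>N. norm (mat_pow A n $ i $ k / fact n * s ^ n) \<le> inverse (fact n) * (?a * \<bar>s\<bar>) ^ n"
  proof (intro exI allI impI)
    fix n
    have "norm (mat_pow A n $ i $ k / fact n * s ^ n) = \<bar>mat_pow A n $ i $ k\<bar> * \<bar>s\<bar> ^ n / fact n"
      by (simp add: abs_mult power_abs)
    also have "\<dots> \<le> ?a ^ n * \<bar>s\<bar> ^ n / fact n"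
      by (intro divide_right_mono mult_right_mono abs_mat_pow_component_le) auto
    finally show "norm (mat_pow A n $ i $ k / fact n * s ^ n) \<le> inverse (fact n) * (?a * \<bar>s\<bar>) ^ n"
      by (simp add: power_mult_distrib divide_inverse mult.commute)
  qed
qed

lemma mat_exp_scaleR_component:
  "mat_exp (s *\<^sub>R A) $ i $ k = (\<Sum>n. mat_pow (A::real^'n^'n) n $ i $ k / fact n * s ^ n)"
proof -
  have term_component:
    "((1 / fact n) *\<^sub>R mat_pow (s *\<^sub>R A) n) $ i $ k = mat_pow A n $ i $ k / fact n * s ^ n" for n i k
    by (simp add: mat_pow_scaleR)
  have "(\<lambda>n. (1 / fact n) *\<^sub>R mat_pow (s *\<^sub>R A) n)
      sums (\<chi> i k. \<Sum>n. mat_pow A n $ i $ k / fact n * s ^ n)"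
    unfolding sums_def
    by (intro vec_tendstoI)
      (simp only: sum_component vec_lambda_beta term_component
        summable_LIMSEQ[OF summable_mat_pow_component_series])
  then show ?thesis
    unfolding mat_exp_def by (simp add: sums_unique[symmetric])
qed

lemma isCont_mat_exp_scaleR_component: "isCont (\<lambda>s. mat_exp (s *\<^sub>R (A::real^'n^'n)) $ i $ k) s"
  unfolding mat_exp_scaleR_component
  by (intro isCont_powser_converges_everywhere summable_mat_pow_component_series)

lemma continuous_on_mat_exp_mult_component:
  "continuous_on S (\<lambda>\<tau>. (mat_exp ((t - \<tau>) *\<^sub>R (A::real^'n^'n)) ** (B::real^'p^'n)) $ i $ j)"
  unfolding matrix_matrix_mult_def vec_lambda_beta
  by (intro continuous_on_sum continuous_on_mult_right continuous_at_imp_continuous_on ballI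
      continuous_at_compose[OF _ isCont_mat_exp_scaleR_component, unfolded o_def])
    (auto intro!: continuous_intros)

lemma absolutely_integrable_if_nonneg:
  fixes p :: "'a::euclidean_space \<Rightarrow> real^'m"
  assumes "p integrable_on S" "\<And>x. x \<in> S \<Longrightarrow> 0 \<le> p x"
  shows "p absolutely_integrable_on S"
  using assms by (intro nonnegative_absolutely_integrable)
    (auto simp: Basis_vec_def less_eq_vec_def inner_axis)

lemma absolutely_integrable_continuous_mult:
  fixes f g :: "'a::euclidean_space \<Rightarrow> real"
  assumes "compact S" "continuous_on S f" "g absolutely_integrable_on S"
  shows "(\<lambda>x. f x * g x) absolutely_integrable_on S"
proof (rule absolutely_integrable_bounded_measurable_product[OF bilinear_times])
  show "S \<in> sets lebesgue"
    using assms(1) by (simp add: compact_imp_closed)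
  then show "f \<in> borel_measurable (lebesgue_on S)"
    using assms(2) by (intro continuous_imp_measurable_on_sets_lebesgue)
  show "bounded (f ` S)"
    using assms(1,2) by (simp add: compact_continuous_image compact_imp_bounded)
qed (fact assms(3))

lemma absolutely_integrable_continuous_matrix_vector_mult:
  fixes W :: "'a::euclidean_space \<Rightarrow> real^'m^'n"
  assumes "compact S" "\<And>i j. continuous_on S (\<lambda>x. W x $ i $ j)" "q absolutely_integrable_on S"
  shows "(\<lambda>x. W x *v q x) absolutely_integrable_on S"
proof -
  have S: "S \<in> sets lebesgue"
    using assms(1) by (simp add: compact_imp_closed)
  have "(\<lambda>x. q x $ j) absolutely_integrable_on S" for j
    using assms(3) absolutely_integrable_on_iff_component[OF S] by blast
  then show ?thesis
    unfolding absolutely_integrable_on_iff_component[OF S] matrix_vector_mult_def vec_lambda_beta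
    by (auto intro!: absolutely_integrable_sum absolutely_integrable_continuous_mult assms(1,2))
qed

lemma integral_continuous_mult_le_Sup:
  fixes f g :: "'a::euclidean_space \<Rightarrow> real"
  assumes S: "compact S" and f: "continuous_on S f"
    and g: "g integrable_on S" "\<And>x. x \<in> S \<Longrightarrow> 0 \<le> g x"
  shows "integral S (\<lambda>x. f x * g x) \<le> Sup (f ` S) * integral S g"
proof -
  have "(\<lambda>x. f x * g x) integrable_on S"
    using absolutely_integrable_continuous_mult[OF S f nonnegative_absolutely_integrable_1[OF g]]
    by (rule set_lebesgue_integral_eq_integral(1))
  moreover have "f x * g x \<le> Sup (f ` S) * g x" if "x \<in> S" for x
    using S f that g(2) by (simp add: mult_right_mono cSUP_upper bounded_imp_bdd_above
        compact_continuous_image compact_imp_bounded)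
  moreover have "(\<lambda>x. Sup (f ` S) * g x) integrable_on S"
    using integrable_on_cmult_left[OF g(1)] by simp
  ultimately have "integral S (\<lambda>x. f x * g x) \<le> integral S (\<lambda>x. Sup (f ` S) * g x)"
    by (intro integral_le)
  then show ?thesis
    by simp
qed

lemma integral_continuous_mult_ge_Inf:
  fixes f g :: "'a::euclidean_space \<Rightarrow> real"
  assumes S: "compact S" and f: "continuous_on S f"
    and g: "g integrable_on S" "\<And>x. x \<in> S \<Longrightarrow> 0 \<le> g x"
  shows "Inf (f ` S) * integral S g \<le> integral S (\<lambda>x. f x * g x)"
proof -
  have "(\<lambda>x. f x * g x) integrable_on S"
    using absolutely_integrable_continuous_mult[OF S f nonnegative_absolutely_integrable_1[OF g]]
    by (rule set_lebesgue_integral_eq_integral(1))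
  moreover have "Inf (f ` S) * g x \<le> f x * g x" if "x \<in> S" for x
    using S f that g(2) by (simp add: mult_right_mono cINF_lower bounded_imp_bdd_below
        compact_continuous_image compact_imp_bounded)
  moreover have "(\<lambda>x. Inf (f ` S) * g x) integrable_on S"
    using integrable_on_cmult_left[OF g(1)] by simp
  ultimately have "integral S (\<lambda>x. Inf (f ` S) * g x) \<le> integral S (\<lambda>x. f x * g x)"
    by (intro integral_le)
  then show ?thesis
    by simp
qed

lemma integrable_mat_exp_mult_vector:
  fixes A :: "real^'n^'n" and B :: "real^'m^'n"
  assumes "q absolutely_integrable_on {a..b}"
  shows "(\<lambda>\<tau>. mat_exp ((t - \<tau>) *\<^sub>R A) ** B *v q \<tau>) integrable_on {a..b}"
  using absolutely_integrable_continuous_matrix_vector_mult[OF compact_Icc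
      continuous_on_mat_exp_mult_component assms]
  by (rule set_lebesgue_integral_eq_integral(1))

lemma state_eq_free_response_plus_bp_int:
  fixes A :: "real^'n^'n" and Bd :: "real^'d^'n" and Bp :: "real^'p^'n"
  assumes d: "d absolutely_integrable_on {0..t}" and p: "p absolutely_integrable_on {0..t}"
  shows "state A Bd Bp x0 d p t = state A Bd Bp x0 d (\<lambda>_. 0) t + bp_int A Bp p t"
proof -
  let ?E = "\<lambda>\<tau>. mat_exp ((t - \<tau>) *\<^sub>R A)"
  have "state A Bd Bp x0 d p t =
      mat_exp (t *\<^sub>R A) *v x0 + (integral {0..t} (\<lambda>\<tau>. ?E \<tau> ** Bd *v d \<tau>) + bp_int A Bp p t)"
    unfolding state_def bp_int_def matrix_vector_right_distrib matrix_vector_mul_assoc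
    by (simp only: integral_add integrable_mat_exp_mult_vector d p)
  moreover have "state A Bd Bp x0 d (\<lambda>_. 0) t =
      mat_exp (t *\<^sub>R A) *v x0 + integral {0..t} (\<lambda>\<tau>. ?E \<tau> ** Bd *v d \<tau>)"
    by (simp add: state_def matrix_vector_mul_assoc)
  ultimately show ?thesis
    by (simp add: add.assoc)
qed

lemma state_le_state_if_bp_int_le:
  fixes A :: "real^'n^'n" and Bd :: "real^'d^'n" and Bp :: "real^'p^'n"
  assumes "d absolutely_integrable_on {0..t}"
    and "p absolutely_integrable_on {0..t}" "q absolutely_integrable_on {0..t}"
    and "bp_int A Bp p t \<le> bp_int A Bp q t"
  shows "state A Bd Bp x0 d p t \<le> state A Bd Bp x0 d q t"
  unfolding state_eq_free_response_plus_bp_int[OF assms(1,2)]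
    state_eq_free_response_plus_bp_int[OF assms(1,3)]
  using assms(4) by (rule add_left_mono)

lemma bp_int_component:
  fixes A :: "real^'n^'n" and Bp :: "real^'p^'n"
  assumes p: "p absolutely_integrable_on {0..t}"
  shows "bp_int A Bp p t $ i =
    (\<Sum>j\<in>UNIV. integral {0..t} (\<lambda>\<tau>. (mat_exp ((t - \<tau>) *\<^sub>R A) ** Bp) $ i $ j * p \<tau> $ j))"
proof -
  let ?M = "\<lambda>\<tau>. mat_exp ((t - \<tau>) *\<^sub>R A) ** Bp"
  have "(\<lambda>\<tau>. p \<tau> $ j) absolutely_integrable_on {0..t}" for j
    using p absolutely_integrable_on_iff_component[of "{0..t}" p] by simp
  then have "(\<lambda>\<tau>. ?M \<tau> $ i $ j * p \<tau> $ j) integrable_on {0..t}" for j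
    by (intro set_lebesgue_integral_eq_integral(1) absolutely_integrable_continuous_mult
        compact_Icc continuous_on_mat_exp_mult_component)
  then have integral_split:
    "integral {0..t} (\<lambda>\<tau>. \<Sum>j\<in>UNIV. ?M \<tau> $ i $ j * p \<tau> $ j) =
      (\<Sum>j\<in>UNIV. integral {0..t} (\<lambda>\<tau>. ?M \<tau> $ i $ j * p \<tau> $ j))"
    by (simp add: Henstock_Kurzweil_Integration.integral_sum)
  have "bp_int A Bp p t $ i = integral {0..t} (\<lambda>\<tau>. (?M \<tau> *v p \<tau>) $ i)"
    unfolding bp_int_def
    by (rule integral_component_eq_cart[OF integrable_mat_exp_mult_vector[OF p], symmetric])
  then show ?thesis
    by (simp only: integral_split matrix_vector_mult_def vec_lambda_beta)
qed

lemma beta_mat_integral_le_bp_int: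
  fixes A :: "real^'n^'n" and Bp :: "real^'p^'n"
  assumes p: "p integrable_on {0..t}" and p_nonneg: "\<And>\<tau>. \<tau> \<in> {0..t} \<Longrightarrow> 0 \<le> p \<tau>"
  shows "beta_mat A Bp t *v integral {0..t} p \<le> bp_int A Bp p t"
proof -
  let ?M = "\<lambda>\<tau>. mat_exp ((t - \<tau>) *\<^sub>R A) ** Bp"
  have pj: "(\<lambda>\<tau>. p \<tau> $ j) integrable_on {0..t}" "\<And>\<tau>. \<tau> \<in> {0..t} \<Longrightarrow> 0 \<le> p \<tau> $ j" for j
    using integrable_component[OF p, of "axis j 1"] p_nonneg
    by (simp_all add: inner_axis less_eq_vec_def)
  have "(beta_mat A Bp t *v integral {0..t} p) $ i =
      (\<Sum>j\<in>UNIV. Inf ((\<lambda>\<tau>. ?M \<tau> $ i $ j) ` {0..t}) * integral {0..t} (\<lambda>\<tau>. p \<tau> $ j))" for i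
    by (simp add: matrix_vector_mult_def beta_mat_def integral_component_eq_cart[OF p, symmetric])
  also have "\<dots> i \<le> (\<Sum>j\<in>UNIV. integral {0..t} (\<lambda>\<tau>. ?M \<tau> $ i $ j * p \<tau> $ j))" for i
    by (intro sum_mono integral_continuous_mult_ge_Inf compact_Icc
        continuous_on_mat_exp_mult_component pj)
  also have "\<dots> i = bp_int A Bp p t $ i" for i
    by (rule bp_int_component[OF absolutely_integrable_if_nonneg[OF p p_nonneg], symmetric])
  finally show ?thesis
    by (simp add: less_eq_vec_def)
qed

lemma bp_int_le_alpha_mat_integral:
  fixes A :: "real^'n^'n" and Bp :: "real^'p^'n"
  assumes p: "p integrable_on {0..t}" and p_nonneg: "\<And>\<tau>. \<tau> \<in> {0..t} \<Longrightarrow> 0 \<le> p \<tau>"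
  shows "bp_int A Bp p t \<le> alpha_mat A Bp t *v integral {0..t} p"
proof -
  let ?M = "\<lambda>\<tau>. mat_exp ((t - \<tau>) *\<^sub>R A) ** Bp"
  have pj: "(\<lambda>\<tau>. p \<tau> $ j) integrable_on {0..t}" "\<And>\<tau>. \<tau> \<in> {0..t} \<Longrightarrow> 0 \<le> p \<tau> $ j" for j
    using integrable_component[OF p, of "axis j 1"] p_nonneg
    by (simp_all add: inner_axis less_eq_vec_def)
  have "bp_int A Bp p t $ i = (\<Sum>j\<in>UNIV. integral {0..t} (\<lambda>\<tau>. ?M \<tau> $ i $ j * p \<tau> $ j))" for i
    by (rule bp_int_component[OF absolutely_integrable_if_nonneg[OF p p_nonneg]])
  also have "\<dots> i \<le>
      (\<Sum>j\<in>UNIV. Sup ((\<lambda>\<tau>. ?M \<tau> $ i $ j) ` {0..t}) * integral {0..t} (\<lambda>\<tau>. p \<tau> $ j))" for i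
    by (intro sum_mono integral_continuous_mult_le_Sup compact_Icc
        continuous_on_mat_exp_mult_component pj)
  also have "\<dots> i = (alpha_mat A Bp t *v integral {0..t} p) $ i" for i
    by (simp add: matrix_vector_mult_def alpha_mat_def integral_component_eq_cart[OF p, symmetric])
  finally show ?thesis
    by (simp add: less_eq_vec_def)
qed

theorem theorem2:
  fixes A :: "real^'n^'n" and Bp :: "real^'p^'n" and Bd :: "real^'d^'n"
    and x0 xmin xmax :: "real^'n" and pmin pmax :: "real^'p"
    and d :: "real \<Rightarrow> real^'d" and pplus pminus pa :: "real \<Rightarrow> real^'p"
    and tf :: real
  assumes hA: "metzler_nonpos_diag A"
    and hBp: "\<forall>i j. Bp $ i $ j \<ge> 0"
    and hp: "0 \<le> pmin" "pmin \<le> pmax"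
    and hx: "xmin \<le> xmax"
    and hd: "d absolutely_integrable_on {0..tf}"
    and hpplus_int: "pplus integrable_on {0..tf}"
    and hpminus_int: "pminus integrable_on {0..tf}"
    and hpa_int: "pa integrable_on {0..tf}"
    and hpplus: "\<forall>t\<in>{0..tf}. pmin \<le> pplus t \<and> pplus t \<le> pmax"
    and hpminus: "\<forall>t\<in>{0..tf}. pmin \<le> pminus t \<and> pminus t \<le> pmax"
    and hxplus: "\<forall>t\<in>{0..tf}. xmin \<le> state A Bd Bp x0 d pplus t \<and> state A Bd Bp x0 d pplus t \<le> xmax"
    and hxminus: "\<forall>t\<in>{0..tf}. xmin \<le> state A Bd Bp x0 d pminus t \<and> state A Bd Bp x0 d pminus t \<le> xmax"
    and hpa: "\<forall>t\<in>{0..tf}. pmin \<le> pa t \<and> pa t \<le> pmax"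
    and halpha: "\<forall>t\<in>{0..tf}. alpha_mat A Bp t *v integral {0..t} pa \<le> bp_int A Bp pplus t"
    and hbeta: "\<forall>t\<in>{0..tf}. beta_mat A Bp t *v integral {0..t} pa \<ge> bp_int A Bp pminus t"
  shows "\<forall>t\<in>{0..tf}. xmin \<le> state A Bd Bp x0 d pa t \<and> state A Bd Bp x0 d pa t \<le> xmax"
proof
  fix t assume t: "t \<in> {0..tf}"
  then have sub: "{0..t} \<subseteq> {0..tf}"
    by auto
  have nonneg: "0 \<le> p \<tau>" if "\<forall>\<tau>\<in>{0..tf}. pmin \<le> p \<tau> \<and> p \<tau> \<le> pmax" "\<tau> \<in> {0..t}" for p \<tau>
    using that sub order_trans[OF hp(1)] by blast
  have abs_int: "p absolutely_integrable_on {0..t}"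
    if "p integrable_on {0..tf}" "\<forall>\<tau>\<in>{0..tf}. pmin \<le> p \<tau> \<and> p \<tau> \<le> pmax" for p
    using integrable_on_subinterval[OF that(1) sub] nonneg[OF that(2)]
    by (rule absolutely_integrable_if_nonneg)
  have pa_int: "pa integrable_on {0..t}"
    using hpa_int sub by (rule integrable_on_subinterval)
  have d: "d absolutely_integrable_on {0..t}"
    using hd sub by (rule absolutely_integrable_on_subinterval)
  note state_mono = state_le_state_if_bp_int_le[OF d]
  have "bp_int A Bp pa t \<le> bp_int A Bp pplus t"
    using bp_int_le_alpha_mat_integral[OF pa_int nonneg[OF hpa]] bspec[OF halpha t]
    by (rule order_trans)
  then have upper: "state A Bd Bp x0 d pa t \<le> state A Bd Bp x0 d pplus t"
    by (rule state_mono[OF abs_int[OF hpa_int hpa] abs_int[OF hpplus_int hpplus]])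
  have "bp_int A Bp pminus t \<le> bp_int A Bp pa t"
    using bspec[OF hbeta t] beta_mat_integral_le_bp_int[OF pa_int nonneg[OF hpa]]
    by (rule order_trans)
  then have lower: "state A Bd Bp x0 d pminus t \<le> state A Bd Bp x0 d pa t"
    by (rule state_mono[OF abs_int[OF hpminus_int hpminus] abs_int[OF hpa_int hpa]])
  show "xmin \<le> state A Bd Bp x0 d pa t \<and> state A Bd Bp x0 d pa t \<le> xmax"
    using order_trans[OF conjunct1[OF bspec[OF hxminus t]] lower]
      order_trans[OF upper conjunct2[OF bspec[OF hxplus t]]] ..
qed

end
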